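(* Let $X^{2n}$ be a quasitoric manifold over a simple polytope $P^n$, $T^{n-1}\subset T^n$ a subtorus, $Q^{n+1}=X^{2n}/T^{n-1}$, and $p\colon Q^{n+1}\to P^n=X^{2n}/T^n$ the projection of the residual $T^n/T^{n-1}$-action. For $x\in P^n$, the preimage $p^{-1}(x)$ is a circle if and only if $x$ is special (and otherwise it is a point).
   Context: For each facet $F$ of $P^n$, $\lambda(F)\in N=\mathrm{Hom}(T^1,T^n)\cong\mathbb{Z}^n$ is the primitive vector of the circle subgroup of $T^n$ stabilizing points of $X^{2n}$ over the interior of $F$. Let $\Pi\subset N$ be the image of $\mathrm{Hom}(T^1,T^{n-1})$ (the kernel of $N\to\mathrm{Hom}(T^1,T^n/T^{n-1})$). A facet $F$ is special if $\lambda(F)\in\Pi$; a proper face is special if all facets containing it are special. A point $x\in P^n$ is special if it lies in the relative interior of a special face. *)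

theory Defs
  imports "HOL-Analysis.Analysis"
begin

definition quotient_topology :: "'a topology \<Rightarrow> ('a \<Rightarrow> 'b) \<Rightarrow> 'b topology" where
  "quotient_topology X f =
     topology (\<lambda>U. U \<subseteq> f ` topspace X \<and> openin X {y \<in> topspace X. f y \<in> U})"

text \<open>Integer vectors viewed as real vectors (lattice N = Z^n inside R^n = Lie algebra of T^n).\<close>
definition rv :: "int^'n \<Rightarrow> real^'n" where
  "rv k = (\<chi> i. real_of_int (k $ i))"

definition int_lattice :: "(real^'n) set" where
  "int_lattice = range rv"

definition idot :: "int^'n \<Rightarrow> int^'n \<Rightarrow> int" where
  "idot a b = (\<Sum>i\<in>UNIV. a $ i * b $ i)"

definition char_vecs :: "(real^'n) set \<Rightarrow> ((real^'n) set \<Rightarrow> int^'n) \<Rightarrow> real^'n \<Rightarrow> (real^'n) set" where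
  "char_vecs P lam x = {rv (lam F) | F. F facet_of P \<and> x \<in> F}"

definition simple_polytope :: "(real^'n) set \<Rightarrow> bool" where
  "simple_polytope P \<longleftrightarrow> polytope P \<and> aff_dim P = int CARD('n) \<and>
     (\<forall>v. {v} face_of P \<longrightarrow> card {F. F facet_of P \<and> v \<in> F} = CARD('n))"

text \<open>Characteristic function of a quasitoric manifold over P: at every vertex the
characteristic vectors of the n facets through it form a Z-basis of N = Z^n.\<close>
definition characteristic_function :: "(real^'n) set \<Rightarrow> ((real^'n) set \<Rightarrow> int^'n) \<Rightarrow> bool" where
  "characteristic_function P lam \<longleftrightarrow>
     (\<forall>v. {v} face_of P \<longrightarrow>
        {\<Sum>F\<in>{F. F facet_of P \<and> v \<in> F}. k F *s lam F | k. True} = UNIV)"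

text \<open>Canonical model X = (T^n x P)/~, with T^n = R^n/Z^n: the point (t,x) is
identified with (t',x) iff t - t' lies in the stabilizer subtorus T_x generated
by the characteristic vectors of the facets containing x.\<close>
definition qX :: "(real^'n) set \<Rightarrow> ((real^'n) set \<Rightarrow> int^'n) \<Rightarrow>
    (real^'n) \<times> (real^'n) \<Rightarrow> ((real^'n) \<times> (real^'n)) set" where
  "qX P lam vx = {(w, y). y \<in> P \<and> y = snd vx \<and>
      (\<exists>a b. a \<in> int_lattice \<and> b \<in> span (char_vecs P lam y) \<and> fst vx - w = a + b)}"

definition X_space :: "(real^'n) set \<Rightarrow> ((real^'n) set \<Rightarrow> int^'n) \<Rightarrow>
    ((real^'n) \<times> (real^'n)) set topology" where
  "X_space P lam = quotient_topology (prod_topology euclidean (top_of_set P)) (qX P lam)"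

text \<open>Quotient Q = X / T^{n-1}, where the subtorus T^{n-1} has Lie algebra
{v. c . v = 0} and lattice Pi = {k in Z^n. c . k = 0}.\<close>
definition qQ :: "(real^'n) set \<Rightarrow> ((real^'n) set \<Rightarrow> int^'n) \<Rightarrow> int^'n \<Rightarrow>
    ((real^'n) \<times> (real^'n)) set \<Rightarrow> ((real^'n) \<times> (real^'n)) set" where
  "qQ P lam c z = {(w, y). \<exists>v. (v, y) \<in> z \<and> y \<in> P \<and>
      (\<exists>a b h. a \<in> int_lattice \<and> b \<in> span (char_vecs P lam y) \<and> rv c \<bullet> h = 0 \<and>
               v - w = a + b + h)}"

definition Q_space :: "(real^'n) set \<Rightarrow> ((real^'n) set \<Rightarrow> int^'n) \<Rightarrow> int^'n \<Rightarrow>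
    ((real^'n) \<times> (real^'n)) set topology" where
  "Q_space P lam c = quotient_topology (X_space P lam) (qQ P lam c)"

definition fibre :: "(real^'n) set \<Rightarrow> ((real^'n) set \<Rightarrow> int^'n) \<Rightarrow> int^'n \<Rightarrow> real^'n \<Rightarrow>
    ((real^'n) \<times> (real^'n)) set set" where
  "fibre P lam c x = {q \<in> topspace (Q_space P lam c). \<exists>v. q = qQ P lam c (qX P lam (v, x))}"

definition special_facet :: "(real^'n) set \<Rightarrow> ((real^'n) set \<Rightarrow> int^'n) \<Rightarrow> int^'n \<Rightarrow> (real^'n) set \<Rightarrow> bool" where
  "special_facet P lam c F \<longleftrightarrow> F facet_of P \<and> idot c (lam F) = 0"

definition special_face :: "(real^'n) set \<Rightarrow> ((real^'n) set \<Rightarrow> int^'n) \<Rightarrow> int^'n \<Rightarrow> (real^'n) set \<Rightarrow> bool" where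
  "special_face P lam c G \<longleftrightarrow> G face_of P \<and> G \<noteq> {} \<and>
     (\<forall>F. F facet_of P \<and> G \<subseteq> F \<longrightarrow> special_facet P lam c F)"

definition special_point :: "(real^'n) set \<Rightarrow> ((real^'n) set \<Rightarrow> int^'n) \<Rightarrow> int^'n \<Rightarrow> real^'n \<Rightarrow> bool" where
  "special_point P lam c x \<longleftrightarrow> (\<exists>G. special_face P lam c G \<and> x \<in> rel_interior G)"

end

theory Submission
  imports Defs
begin

text \<open>Over \<open>y \<in> P\<close> the points of \<open>Q\<close> are the classes of \<open>v \<in> \<real>\<^sup>n\<close> modulo the group
  \<open>\<int>\<^sup>n + span {\<lambda>(F) | y \<in> F} + c\<^sup>\<bottom>\<close>. If some facet \<open>F\<close> through \<open>y\<close> is not special,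
  \<open>\<lambda>(F)\<close> is transverse to \<open>c\<^sup>\<bottom>\<close>, the group is all of \<open>\<real>\<^sup>n\<close> and the fibre is a point.
  Otherwise the span lies in \<open>c\<^sup>\<bottom>\<close>, the group is \<open>{v. c \<bullet> v \<in> d\<int>}\<close> with \<open>d\<close> the gcd of
  the entries of \<open>c\<close>, and \<open>v \<mapsto> exp (2\<pi>i c \<bullet> v / d)\<close> maps the fibre bijectively onto the
  unit circle. This map is continuous because the points all of whose facets are special form
  an open set, over which the quotient map can be restricted; being a continuous bijection from
  a compact space to a Hausdorff one, it is a homeomorphism. Finally, a point is special iff
  all facets through it are, as one sees from the face containing it in its relative interior.\<close>

lemma openin_quotient_topology:
  "openin (quotient_topology X f) U \<longleftrightarrow>
     U \<subseteq> f ` topspace X \<and> openin X {y \<in> topspace X. f y \<in> U}"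
proof -
  have inter: "{y \<in> topspace X. f y \<in> S \<inter> T} =
      {y \<in> topspace X. f y \<in> S} \<inter> {y \<in> topspace X. f y \<in> T}" for S T
    by auto
  have union: "{y \<in> topspace X. f y \<in> \<Union>K} = (\<Union>S\<in>K. {y \<in> topspace X. f y \<in> S})" for K
    by auto
  have "istopology (\<lambda>U. U \<subseteq> f ` topspace X \<and> openin X {y \<in> topspace X. f y \<in> U})"
    unfolding istopology_def inter union by auto
  then show ?thesis
    by (simp add: quotient_topology_def)
qed

lemma topspace_quotient_topology: "topspace (quotient_topology X f) = f ` topspace X"
proof (rule subset_antisym)
  show "topspace (quotient_topology X f) \<subseteq> f ` topspace X"
    using openin_quotient_topology[of X f "topspace (quotient_topology X f)"] by auto
  have "{y \<in> topspace X. f y \<in> f ` topspace X} = topspace X" by auto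
  then have "openin (quotient_topology X f) (f ` topspace X)"
    by (simp add: openin_quotient_topology)
  then show "f ` topspace X \<subseteq> topspace (quotient_topology X f)"
    by (rule openin_subset)
qed

lemma quotient_map_quotient_topology: "quotient_map X (quotient_topology X f) f"
  unfolding quotient_map_def topspace_quotient_topology openin_quotient_topology by auto

lemma singleton_not_homeomorphic_sphere:
  assumes "topspace X = {q}"
  shows "\<not> X homeomorphic_space top_of_set (sphere (0::'a::euclidean_space) 1)"
proof
  assume "X homeomorphic_space top_of_set (sphere (0::'a) 1)"
  then obtain f where "homeomorphic_map X (top_of_set (sphere (0::'a) 1)) f"
    unfolding homeomorphic_space by blast
  then have "sphere (0::'a) 1 = {f q}"
    using homeomorphic_imp_surjective_map assms by fastforce
  moreover obtain u :: 'a where "norm u = 1"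
    using vector_choose_size[of 1] by auto
  ultimately have "u = - u"
    by (metis mem_sphere_0 norm_minus_cancel singletonD)
  then show False
    using \<open>norm u = 1\<close> by (metis norm_zero one_neq_neg_one scaleR_cancel_right scaleR_left.minus scaleR_one)
qed

lemma homeomorphic_space_top_of_set:
  "S homeomorphic T \<Longrightarrow> top_of_set S homeomorphic_space top_of_set T"
  unfolding homeomorphic_def homeomorphic_space_def
  by (force simp: Pi_iff homeomorphic_maps_def homeomorphism_def)

lemma inner_rv: "rv a \<bullet> rv b = of_int (idot a b)"
  by (simp add: rv_def idot_def inner_vec_def)

lemma idot_diff: "idot c (a - b) = idot c a - idot c b"
  by (simp add: idot_def algebra_simps sum_subtractf)

lemma idot_smult: "idot c (j *s k) = j * idot c k"
  by (simp add: idot_def sum_distrib_left algebra_simps)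

lemma idot_self_pos:
  assumes "c \<noteq> 0"
  shows "0 < idot c c"
proof -
  obtain i where "c $ i \<noteq> 0"
    using assms by (auto simp: vec_eq_iff)
  then show ?thesis
    unfolding idot_def by (intro sum_pos2[of UNIV i]) (auto simp: zero_less_mult_iff linorder_neq_iff)
qed

lemma rv_eq_0_iff [simp]: "rv c = 0 \<longleftrightarrow> c = 0"
  by (simp add: rv_def vec_eq_iff)

lemma rv_zero: "rv 0 = 0"
  by (simp add: rv_def vec_eq_iff)

lemma rv_add: "rv (a + b) = rv a + rv b"
  by (simp add: rv_def vec_eq_iff)

lemma rv_uminus: "rv (- a) = - rv a"
  by (simp add: rv_def vec_eq_iff)

lemma int_lattice_zero: "0 \<in> int_lattice"
  unfolding int_lattice_def by (auto simp flip: rv_zero)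

lemma int_lattice_add: "a \<in> int_lattice \<Longrightarrow> b \<in> int_lattice \<Longrightarrow> a + b \<in> int_lattice"
  unfolding int_lattice_def by (auto simp flip: rv_add)

lemma int_lattice_uminus: "a \<in> int_lattice \<Longrightarrow> - a \<in> int_lattice"
  unfolding int_lattice_def by (auto simp flip: rv_uminus)

text \<open>The gcd \<open>d\<close> of the entries of \<open>c\<close>, i.e. the positive generator of \<open>c \<bullet> \<int>\<^sup>n\<close>;
  \<open>v \<mapsto> c \<bullet> v\<close> identifies \<open>T\<^sup>n/T\<^sup>n\<^sup>-\<^sup>1\<close> with \<open>\<real>/d\<int>\<close>.\<close>
definition idot_gcd :: "int^'n \<Rightarrow> nat" where
  "idot_gcd c = (LEAST d. 0 < d \<and> (\<exists>k. idot c k = int d))"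

lemma idot_gcd:
  assumes "c \<noteq> 0"
  shows idot_gcd_pos: "0 < idot_gcd c" and idot_gcd_attained: "\<exists>k. idot c k = int (idot_gcd c)"
proof -
  have "0 < nat (idot c c) \<and> (\<exists>k. idot c k = int (nat (idot c c)))"
    using idot_self_pos[OF assms] by auto
  then have "0 < idot_gcd c \<and> (\<exists>k. idot c k = int (idot_gcd c))"
    unfolding idot_gcd_def by (rule LeastI)
  then show "0 < idot_gcd c" "\<exists>k. idot c k = int (idot_gcd c)"
    by auto
qed

lemma idot_gcd_dvd:
  assumes "c \<noteq> 0"
  shows "int (idot_gcd c) dvd idot c k"
proof (rule ccontr)
  define d where "d = int (idot_gcd c)"
  obtain k0 where k0: "idot c k0 = d"
    using idot_gcd_attained[OF assms] d_def by blast
  have d_pos: "0 < d"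
    using idot_gcd_pos[OF assms] d_def by simp
  define r where "r = idot c k mod d"
  have r_attained: "idot c (k - (idot c k div d) *s k0) = r"
    by (simp add: idot_diff idot_smult k0 r_def minus_div_mult_eq_mod[symmetric] algebra_simps)
  assume "\<not> int (idot_gcd c) dvd idot c k"
  then have "r \<noteq> 0"
    by (simp add: r_def d_def dvd_eq_mod_eq_0)
  moreover have "0 \<le> r" "r < d"
    using d_pos by (simp_all add: r_def)
  ultimately have "0 < nat r \<and> (\<exists>k. idot c k = int (nat r))"
    using r_attained by auto
  then have "idot_gcd c \<le> nat r"
    unfolding idot_gcd_def by (rule Least_le)
  then show False
    using \<open>r < d\<close> \<open>0 \<le> r\<close> d_def by linarith
qed

lemma exists_inner_rv_eq_1:
  assumes "c \<noteq> 0"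
  obtains u where "rv c \<bullet> u = 1"
proof
  have "rv c \<bullet> rv c \<noteq> 0"
    using assms by simp
  then show "rv c \<bullet> ((1 / (rv c \<bullet> rv c)) *\<^sub>R rv c) = 1"
    by (simp only: inner_scaleR_right) simp
qed

text \<open>Translations of \<open>\<real>\<^sup>n\<close> (the Lie algebra of \<open>T\<^sup>n\<close>) that fix the points of \<open>Q\<close> over \<open>y\<close>:
  lifts of the identity of \<open>T\<^sup>n\<close>, of the stabiliser \<open>T\<^sub>y\<close>, and of \<open>T\<^sup>n\<^sup>-\<^sup>1\<close>.\<close>
definition isotropy :: "(real^'n) set \<Rightarrow> ((real^'n) set \<Rightarrow> int^'n) \<Rightarrow> int^'n \<Rightarrow> real^'n \<Rightarrow> (real^'n) set"
  where "isotropy P lam c y =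
    {a + b + h | a b h. a \<in> int_lattice \<and> b \<in> span (char_vecs P lam y) \<and> rv c \<bullet> h = 0}"

lemma isotropy_zero: "0 \<in> isotropy P lam c y"
  unfolding isotropy_def using int_lattice_zero span_zero by force

lemma isotropy_add:
  assumes "u \<in> isotropy P lam c y" "u' \<in> isotropy P lam c y"
  shows "u + u' \<in> isotropy P lam c y"
proof -
  obtain a b h a' b' h' where
    "a \<in> int_lattice" "b \<in> span (char_vecs P lam y)" "rv c \<bullet> h = 0" "u = a + b + h"
    "a' \<in> int_lattice" "b' \<in> span (char_vecs P lam y)" "rv c \<bullet> h' = 0" "u' = a' + b' + h'"
    using assms unfolding isotropy_def by blast
  then show ?thesis
    unfolding isotropy_def
    by (intro CollectI exI[of _ "a + a'"] exI[of _ "b + b'"] exI[of _ "h + h'"])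
       (simp add: int_lattice_add span_add algebra_simps)
qed

lemma isotropy_uminus:
  assumes "u \<in> isotropy P lam c y"
  shows "- u \<in> isotropy P lam c y"
proof -
  obtain a b h where
    "a \<in> int_lattice" "b \<in> span (char_vecs P lam y)" "rv c \<bullet> h = 0" "u = a + b + h"
    using assms unfolding isotropy_def by blast
  then show ?thesis
    unfolding isotropy_def
    by (intro CollectI exI[of _ "- a"] exI[of _ "- b"] exI[of _ "- h"])
       (simp add: int_lattice_uminus span_neg)
qed

definition qmap :: "(real^'n) set \<Rightarrow> ((real^'n) set \<Rightarrow> int^'n) \<Rightarrow> int^'n \<Rightarrow>
    (real^'n) \<times> (real^'n) \<Rightarrow> ((real^'n) \<times> (real^'n)) set"
  where "qmap P lam c = qQ P lam c \<circ> qX P lam"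

lemma mem_qmap:
  "(w, y) \<in> qmap P lam c (v, x) \<longleftrightarrow> y = x \<and> x \<in> P \<and> v - w \<in> isotropy P lam c x"
proof
  assume "(w, y) \<in> qmap P lam c (v, x)"
  then obtain v' a b a' b' h where yx: "y = x" "x \<in> P"
    and first: "a \<in> int_lattice" "b \<in> span (char_vecs P lam x)" "v - v' = a + b"
    and second: "a' \<in> int_lattice" "b' \<in> span (char_vecs P lam x)" "rv c \<bullet> h = 0"
      "v' - w = a' + b' + h"
    unfolding qmap_def qQ_def qX_def by auto
  have "v - v' = a + b + 0" "rv c \<bullet> 0 = 0"
    using first by simp_all
  then have "v - v' \<in> isotropy P lam c x"
    unfolding isotropy_def using first by blast
  moreover have "v' - w \<in> isotropy P lam c x"
    unfolding isotropy_def using second by blast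
  ultimately have "(v - v') + (v' - w) \<in> isotropy P lam c x"
    by (rule isotropy_add)
  then show "y = x \<and> x \<in> P \<and> v - w \<in> isotropy P lam c x"
    using yx by simp
next
  assume "y = x \<and> x \<in> P \<and> v - w \<in> isotropy P lam c x"
  moreover have "(v, x) \<in> qX P lam (v, x)"
    unfolding qX_def using calculation int_lattice_zero span_zero by force
  ultimately show "(w, y) \<in> qmap P lam c (v, x)"
    unfolding qmap_def qQ_def isotropy_def by auto
qed

lemma qmap_eq_iff:
  assumes "x \<in> P"
  shows "qmap P lam c (v, x) = qmap P lam c (w, x) \<longleftrightarrow> v - w \<in> isotropy P lam c x"
proof
  assume "qmap P lam c (v, x) = qmap P lam c (w, x)"
  moreover have "(w, x) \<in> qmap P lam c (w, x)"
    using assms by (simp add: mem_qmap isotropy_zero)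
  ultimately have "(w, x) \<in> qmap P lam c (v, x)"
    by simp
  then show "v - w \<in> isotropy P lam c x"
    by (simp add: mem_qmap)
next
  assume vw: "v - w \<in> isotropy P lam c x"
  then have wv: "w - v \<in> isotropy P lam c x"
    using isotropy_uminus by fastforce
  show "qmap P lam c (v, x) = qmap P lam c (w, x)"
  proof (rule set_eqI, clarify)
    fix u y
    have "v - u = (v - w) + (w - u)" "w - u = (w - v) + (v - u)"
      by simp_all
    then show "(u, y) \<in> qmap P lam c (v, x) \<longleftrightarrow> (u, y) \<in> qmap P lam c (w, x)"
      unfolding mem_qmap using vw wv isotropy_add by metis
  qed
qed

lemma qmap_eq_imp_snd_eq: "qmap P lam c (v, y) = qmap P lam c (w, x) \<Longrightarrow> y \<in> P \<Longrightarrow> y = x"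
  by (metis isotropy_zero diff_self mem_qmap)

lemma quotient_map_qmap:
  "quotient_map (prod_topology euclidean (top_of_set P)) (Q_space P lam c) (qmap P lam c)"
  unfolding qmap_def Q_space_def X_space_def
  by (rule quotient_map_compose[OF quotient_map_quotient_topology quotient_map_quotient_topology])

lemma topspace_Q_space: "topspace (Q_space P lam c) = qmap P lam c ` (UNIV \<times> P)"
  using quotient_imp_surjective_map[OF quotient_map_qmap, of P lam c] by simp

lemma fibre_eq_range: "x \<in> P \<Longrightarrow> fibre P lam c x = range (\<lambda>v. qmap P lam c (v, x))"
  unfolding fibre_def topspace_Q_space by (auto simp: qmap_def)

lemma exists_face_rel_interior:
  fixes P :: "'a::euclidean_space set"
  assumes "polytope P" "x \<in> P"
  obtains G where "G face_of P" "x \<in> rel_interior G"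
  using assms
proof (induction "nat (aff_dim P)" arbitrary: P thesis rule: less_induct)
  case less
  show ?case
  proof (cases "x \<in> rel_interior P")
    case True
    then show ?thesis
      using less.prems face_of_refl polytope_imp_convex by blast
  next
    case False
    then have "x \<in> rel_frontier P"
      using less.prems by (simp add: rel_frontier_def polytope_imp_closed)
    then obtain F where F: "F facet_of P" "x \<in> F"
      using less.prems rel_frontier_of_polyhedron polytope_imp_polyhedron by blast
    have "polytope F" "aff_dim F = aff_dim P - 1"
      using less.prems F face_of_polytope_polytope by (auto simp: facet_of_def)
    moreover have "0 \<le> aff_dim F"
      using F aff_dim_negative_iff[of F] by (metis empty_iff not_less)
    ultimately have "nat (aff_dim F) < nat (aff_dim P)"
      by linarith
    then obtain G where "G face_of F" "x \<in> rel_interior G"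
      using less.hyps \<open>polytope F\<close> F by blast
    then show ?thesis
      using less.prems F face_of_trans by (auto simp: facet_of_def)
  qed
qed

definition all_facets_special ::
    "(real^'n) set \<Rightarrow> ((real^'n) set \<Rightarrow> int^'n) \<Rightarrow> int^'n \<Rightarrow> real^'n \<Rightarrow> bool"
  where "all_facets_special P lam c y \<longleftrightarrow>
    (\<forall>F. F facet_of P \<and> y \<in> F \<longrightarrow> special_facet P lam c F)"

lemma special_point_iff_all_facets_special:
  assumes "polytope P" "x \<in> P"
  shows "special_point P lam c x \<longleftrightarrow> all_facets_special P lam c x"
proof
  assume "special_point P lam c x"
  then obtain G where G: "special_face P lam c G" "x \<in> rel_interior G"
    unfolding special_point_def by blast
  have "G \<subseteq> F" if "F facet_of P" "x \<in> F" for F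
    using that G subset_of_face_of[of F P G] face_of_imp_subset
    by (auto simp: facet_of_def special_face_def)
  then show "all_facets_special P lam c x"
    using G unfolding all_facets_special_def special_face_def by blast
next
  assume special: "all_facets_special P lam c x"
  obtain G where G: "G face_of P" "x \<in> rel_interior G"
    using exists_face_rel_interior assms by blast
  then have "special_face P lam c G"
    using special rel_interior_subset
    unfolding special_face_def all_facets_special_def by blast
  then show "special_point P lam c x"
    unfolding special_point_def using G by blast
qed

lemma openin_all_facets_special:
  assumes "polytope P"
  shows "openin (top_of_set P) {y \<in> P. all_facets_special P lam c y}"
proof -
  define C where "C = \<Union>{F. F facet_of P \<and> \<not> special_facet P lam c F}"
  have "finite {F. F facet_of P \<and> \<not> special_facet P lam c F}"
    by (rule finite_subset[OF _ finite_polytope_faces[OF assms]]) (auto simp: facet_of_def)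
  then have "closed C"
    unfolding C_def using assms
    by (intro closed_Union) (auto intro: face_of_imp_closed polytope_imp_convex polytope_imp_closed
        simp: facet_of_def)
  then have "openin (top_of_set P) (P - (P \<inter> C))"
    by (intro openin_diff closedin_closed_Int) auto
  moreover have "P - (P \<inter> C) = {y \<in> P. all_facets_special P lam c y}"
    unfolding C_def all_facets_special_def by auto
  ultimately show ?thesis
    by simp
qed

lemma isotropy_eq_UNIV:
  assumes "\<not> all_facets_special P lam c y"
  shows "isotropy P lam c y = UNIV"
proof -
  obtain F where F: "F facet_of P" "y \<in> F" "idot c (lam F) \<noteq> 0"
    using assms unfolding all_facets_special_def special_facet_def by blast
  then have span: "rv (lam F) \<in> span (char_vecs P lam y)"
    unfolding char_vecs_def by (intro span_base) blast
  have nonzero: "rv c \<bullet> rv (lam F) \<noteq> 0"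
    using F by (simp add: inner_rv)
  have "u \<in> isotropy P lam c y" for u
  proof -
    define b where "b = ((rv c \<bullet> u) / (rv c \<bullet> rv (lam F))) *\<^sub>R rv (lam F)"
    have "b \<in> span (char_vecs P lam y)"
      unfolding b_def using span by (rule span_mul)
    moreover have "rv c \<bullet> (u - b) = 0"
      using nonzero by (simp add: b_def inner_diff_right)
    moreover have "u = 0 + b + (u - b)"
      by simp
    ultimately show ?thesis
      unfolding isotropy_def using int_lattice_zero by blast
  qed
  then show ?thesis
    by blast
qed

lemma multiple_in_isotropy:
  assumes "c \<noteq> 0" "rv c \<bullet> u = of_int j * real (idot_gcd c)"
  shows "u \<in> isotropy P lam c y"
proof -
  obtain k where k: "idot c k = int (idot_gcd c)"
    using idot_gcd_attained[OF assms(1)] by blast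
  define a where "a = rv (j *s k)"
  have "a \<in> int_lattice"
    unfolding a_def int_lattice_def by blast
  moreover have "rv c \<bullet> (u - a) = 0"
    using assms(2) by (simp add: a_def inner_diff_right inner_rv idot_smult k)
  moreover have "u = a + 0 + (u - a)"
    by simp
  ultimately show ?thesis
    unfolding isotropy_def using span_zero by blast
qed

lemma isotropy_imp_multiple:
  assumes "all_facets_special P lam c y" "c \<noteq> 0" "u \<in> isotropy P lam c y"
  obtains j :: int where "rv c \<bullet> u = of_int j * real (idot_gcd c)"
proof -
  obtain a b h where abh: "a \<in> int_lattice" "b \<in> span (char_vecs P lam y)" "rv c \<bullet> h = 0"
    "u = a + b + h"
    using assms(3) unfolding isotropy_def by blast
  obtain k where k: "a = rv k"
    using abh unfolding int_lattice_def by blast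
  obtain j where j: "idot c k = int (idot_gcd c) * j"
    using idot_gcd_dvd[OF assms(2), of k] by (elim dvdE)
  have "span (char_vecs P lam y) \<subseteq> {h. rv c \<bullet> h = 0}"
    using assms(1) subspace_hyperplane[of "rv c"]
    by (intro span_minimal)
       (auto simp: char_vecs_def all_facets_special_def special_facet_def inner_rv)
  then have "rv c \<bullet> b = 0"
    using abh by blast
  then have "rv c \<bullet> u = of_int j * real (idot_gcd c)"
    using abh k j by (simp add: inner_add_right inner_rv)
  then show ?thesis
    by (rule that)
qed

definition circle_coord :: "int^'n \<Rightarrow> real^'n \<Rightarrow> complex" where
  "circle_coord c v = cis (2 * pi * (rv c \<bullet> v) / real (idot_gcd c))"

lemma circle_coord_eq_iff:
  assumes "c \<noteq> 0"
  shows "circle_coord c v = circle_coord c w \<longleftrightarrow>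
    (\<exists>j::int. rv c \<bullet> (v - w) = of_int j * real (idot_gcd c))"
proof -
  define d where "d = real (idot_gcd c)"
  have "d > 0"
    using idot_gcd_pos[OF assms] by (simp add: d_def)
  have cis_eq_iff: "cis a = cis b \<longleftrightarrow> (\<exists>j::int. a = b + 2 * pi * j)" for a b
    using sin_cos_eq_iff[of a b] by (auto simp: complex_eq_iff)
  have scale: "2 * pi * a / d = 2 * pi * b / d + 2 * pi * t \<longleftrightarrow> a - b = t * d" for a b t
  proof -
    have "2 * pi * a / d = 2 * pi * b / d + 2 * pi * t \<longleftrightarrow> (2 * pi) * a = (2 * pi) * (b + t * d)"
      using \<open>d > 0\<close> by (simp add: field_simps)
    also have "\<dots> \<longleftrightarrow> a = b + t * d"
      by (simp only: mult_cancel_left) simp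
    finally show ?thesis
      by linarith
  qed
  show ?thesis
    by (simp add: circle_coord_def cis_eq_iff scale inner_diff_right flip: d_def)
qed

lemma continuous_circle_coord: "continuous_map euclidean euclidean (circle_coord c)"
  unfolding continuous_map_iff_continuous2 circle_coord_def cis_conv_exp divide_inverse
  by (intro continuous_intros)

lemma qmap_eq_iff_circle_coord_eq:
  assumes "x \<in> P" "all_facets_special P lam c x" "c \<noteq> 0"
  shows "qmap P lam c (v, x) = qmap P lam c (w, x) \<longleftrightarrow> circle_coord c v = circle_coord c w"
proof -
  have "v - w \<in> isotropy P lam c x \<longleftrightarrow>
      (\<exists>j::int. rv c \<bullet> (v - w) = of_int j * real (idot_gcd c))"
    using multiple_in_isotropy[OF assms(3)] isotropy_imp_multiple[OF assms(2,3)] by metis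
  then show ?thesis
    using qmap_eq_iff[OF assms(1)] circle_coord_eq_iff[OF assms(3)] by simp
qed

text \<open>\<open>circle_coord\<close> descends to \<open>Q\<close> only over the open set \<open>W\<close> of points all of whose facets
  are special; it is lifted through the restriction of \<open>qmap\<close> to the saturated open set
  \<open>\<real>\<^sup>n \<times> W\<close>, which is again a quotient map.\<close>
lemma circle_coord_lift:
  fixes P :: "(real^'n) set"
  assumes P: "polytope P" and x: "x \<in> P" and special: "all_facets_special P lam c x"
    and c: "c \<noteq> 0"
  obtains g where "continuous_map (subtopology (Q_space P lam c) (fibre P lam c x)) euclidean g"
    "\<And>v. g (qmap P lam c (v, x)) = circle_coord c v"
proof -
  define X :: "((real^'n) \<times> (real^'n)) topology" where "X = prod_topology euclidean (top_of_set P)"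
  define W where "W = {y \<in> P. all_facets_special P lam c y}"
  define V where "V = qmap P lam c ` (UNIV \<times> W)"
  have "W \<subseteq> P"
    by (auto simp: W_def)
  have saturated: "{p \<in> topspace X. qmap P lam c p \<in> V} = UNIV \<times> W"
  proof (intro subset_antisym subsetI)
    fix p
    assume "p \<in> {p \<in> topspace X. qmap P lam c p \<in> V}"
    then obtain v y v' y' where "p = (v, y)" "y \<in> P" "y' \<in> W"
      and eq: "qmap P lam c (v, y) = qmap P lam c (v', y')"
      by (auto simp: X_def V_def)
    moreover have "y = y'"
      using qmap_eq_imp_snd_eq[OF eq \<open>y \<in> P\<close>] .
    ultimately show "p \<in> UNIV \<times> W"
      by simp
  next
    fix p :: "(real^'n) \<times> (real^'n)"
    assume "p \<in> UNIV \<times> W"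
    then show "p \<in> {p \<in> topspace X. qmap P lam c p \<in> V}"
      using \<open>W \<subseteq> P\<close> by (auto simp: X_def V_def)
  qed
  have "V \<subseteq> topspace (Q_space P lam c)"
    using \<open>W \<subseteq> P\<close> by (auto simp: V_def topspace_Q_space)
  then have "openin (Q_space P lam c) V \<longleftrightarrow> openin X {p \<in> topspace X. qmap P lam c p \<in> V}"
    using quotient_map_qmap[of P lam c] unfolding quotient_map_def X_def by simp
  moreover have "openin (top_of_set P) W"
    unfolding W_def by (rule openin_all_facets_special[OF P])
  then have "openin X (UNIV \<times> W)"
    unfolding X_def by (simp add: openin_prod_Times_iff)
  ultimately have "openin (Q_space P lam c) V"
    by (simp add: saturated)
  then have quotient:
    "quotient_map (subtopology X (UNIV \<times> W)) (subtopology (Q_space P lam c) V) (qmap P lam c)"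
    unfolding X_def by (intro quotient_map_restriction[OF quotient_map_qmap saturated[unfolded X_def]]) simp
  have continuous: "continuous_map (subtopology X (UNIV \<times> W)) euclidean (circle_coord c \<circ> fst)"
    unfolding X_def
    by (intro continuous_map_from_subtopology continuous_map_compose[OF continuous_map_fst]
        continuous_circle_coord)
  have well_defined: "(circle_coord c \<circ> fst) p = (circle_coord c \<circ> fst) p'"
    if "p \<in> topspace (subtopology X (UNIV \<times> W))" "p' \<in> topspace (subtopology X (UNIV \<times> W))"
      "qmap P lam c p = qmap P lam c p'" for p p'
  proof -
    obtain v y v' y' where pp': "p = (v, y)" "p' = (v', y')"
      by fastforce
    then have y: "y \<in> P" "all_facets_special P lam c y"
      and eq: "qmap P lam c (v, y) = qmap P lam c (v', y')"
      using that by (auto simp: X_def W_def)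
    moreover have "y = y'"
      using qmap_eq_imp_snd_eq[OF eq \<open>y \<in> P\<close>] .
    ultimately show ?thesis
      using pp' qmap_eq_iff_circle_coord_eq[OF y c] by simp
  qed
  obtain g where g: "continuous_map (subtopology (Q_space P lam c) V) euclidean g"
    "g ` topspace (subtopology (Q_space P lam c) V) =
      (circle_coord c \<circ> fst) ` topspace (subtopology X (UNIV \<times> W))"
    "\<And>p. p \<in> topspace (subtopology X (UNIV \<times> W)) \<Longrightarrow> g (qmap P lam c p) = (circle_coord c \<circ> fst) p"
    using quotient_map_lift_exists[OF quotient continuous] well_defined by blast
  have "fibre P lam c x \<subseteq> V"
    using x special by (auto simp: fibre_eq_range V_def W_def)
  moreover have "(v, x) \<in> topspace (subtopology X (UNIV \<times> W))" for v
    using x special by (simp add: X_def W_def)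
  ultimately show thesis
    using that continuous_map_from_subtopology_mono[OF g(1)] g(3) by (metis comp_apply fst_conv)
qed

lemma compactin_fibre:
  assumes x: "x \<in> P" and c: "c \<noteq> 0"
  shows "compactin (Q_space P lam c) (fibre P lam c x)"
proof -
  obtain u where u: "rv c \<bullet> u = 1"
    using exists_inner_rv_eq_1[OF c] by blast
  define d where "d = real (idot_gcd c)"
  have "0 < d"
    using idot_gcd_pos[OF c] by (simp add: d_def)
  define K where "K = (\<lambda>s. s *\<^sub>R u) ` {0..d} \<times> {x}"
  have "compact ((\<lambda>s. s *\<^sub>R u) ` {0..d})"
    by (intro compact_continuous_image continuous_intros) auto
  then have "compactin (prod_topology euclidean (top_of_set P)) K"
    unfolding K_def using x by (auto simp: compactin_Times compactin_subtopology)
  moreover have "fibre P lam c x \<subseteq> qmap P lam c ` K"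
  proof
    fix q
    assume "q \<in> fibre P lam c x"
    then obtain v where q: "q = qmap P lam c (v, x)"
      using fibre_eq_range[OF x] by auto
    define j where "j = \<lfloor>(rv c \<bullet> v) / d\<rfloor>"
    define s where "s = rv c \<bullet> v - of_int j * d"
    have "0 \<le> s" "s \<le> d"
      using floor_divide_lower[OF \<open>0 < d\<close>] floor_divide_upper[OF \<open>0 < d\<close>, of "rv c \<bullet> v"]
      by (auto simp: s_def j_def algebra_simps)
    have "rv c \<bullet> (v - s *\<^sub>R u) = of_int j * d"
      by (simp add: s_def u inner_diff_right)
    then have "v - s *\<^sub>R u \<in> isotropy P lam c x"
      unfolding d_def by (rule multiple_in_isotropy[OF c])
    then have "q = qmap P lam c (s *\<^sub>R u, x)"
      using q qmap_eq_iff[OF x] by simp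
    moreover have "(s *\<^sub>R u, x) \<in> K"
      using \<open>0 \<le> s\<close> \<open>s \<le> d\<close> by (auto simp: K_def)
    ultimately show "q \<in> qmap P lam c ` K"
      by blast
  qed
  moreover have "qmap P lam c ` K \<subseteq> fibre P lam c x"
    using x by (auto simp: K_def fibre_eq_range)
  ultimately show ?thesis
    using image_compactin quotient_imp_continuous_map[OF quotient_map_qmap] by (metis subset_antisym)
qed

lemma fibre_homeomorphic_circle:
  assumes P: "polytope P" and x: "x \<in> P" and special: "all_facets_special P lam c x"
    and c: "c \<noteq> 0"
  shows "subtopology (Q_space P lam c) (fibre P lam c x)
           homeomorphic_space top_of_set (sphere (0::complex) 1)"
proof -
  obtain g where g_cont: "continuous_map (subtopology (Q_space P lam c) (fibre P lam c x)) euclidean g"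
    and g_qmap: "\<And>v. g (qmap P lam c (v, x)) = circle_coord c v"
    using circle_coord_lift[OF assms] by blast
  have fibre: "fibre P lam c x = range (\<lambda>v. qmap P lam c (v, x))"
    by (rule fibre_eq_range[OF x])
  have topspace: "topspace (subtopology (Q_space P lam c) (fibre P lam c x)) = fibre P lam c x"
    by (rule topspace_subtopology_subset) (auto simp: fibre_def)
  have "g ` fibre P lam c x = sphere 0 1"
  proof
    show "g ` fibre P lam c x \<subseteq> sphere 0 1"
      by (auto simp: fibre g_qmap circle_coord_def)
    show "sphere 0 1 \<subseteq> g ` fibre P lam c x"
    proof
      fix z :: complex
      assume "z \<in> sphere 0 1"
      then have "z \<noteq> 0" "norm z = 1"
        by auto
      then have z: "cis (Arg z) = z"
        using cis_Arg[of z] by (simp add: sgn_div_norm)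
      obtain u where u: "rv c \<bullet> u = 1"
        using exists_inner_rv_eq_1[OF c] by blast
      have "circle_coord c ((Arg z * real (idot_gcd c) / (2 * pi)) *\<^sub>R u) = z"
        using u idot_gcd_pos[OF c] z by (simp add: circle_coord_def)
      then show "z \<in> g ` fibre P lam c x"
        unfolding fibre by (metis g_qmap rangeI image_eqI)
    qed
  qed
  moreover have "inj_on g (fibre P lam c x)"
    using qmap_eq_iff_circle_coord_eq[OF x special c] by (auto simp: fibre g_qmap inj_on_def)
  moreover have "compact_space (subtopology (Q_space P lam c) (fibre P lam c x))"
    by (rule compact_space_subtopology[OF compactin_fibre[OF x c]])
  ultimately have "homeomorphic_map (subtopology (Q_space P lam c) (fibre P lam c x))
      (top_of_set (sphere 0 1)) g"
    using g_cont topspace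
    by (intro continuous_imp_homeomorphic_map Hausdorff_space_subtopology Hausdorff_space_euclidean)
       (auto simp: continuous_map_in_subtopology)
  then show ?thesis
    by (rule homeomorphic_map_imp_homeomorphic_space)
qed

lemma fibre_eq_singleton:
  assumes "x \<in> P" "\<not> all_facets_special P lam c x"
  shows "fibre P lam c x = {qmap P lam c (0, x)}"
proof -
  have "qmap P lam c (v, x) = qmap P lam c (0, x)" for v
    using qmap_eq_iff[OF assms(1)] isotropy_eq_UNIV[OF assms(2)] by blast
  then show ?thesis
    using fibre_eq_range[OF assms(1)] by auto
qed

theorem lemma2p5:
  fixes P :: "(real^'n) set" and lam :: "(real^'n) set \<Rightarrow> int^'n"
    and c :: "int^'n" and x :: "real^'n"
  assumes "simple_polytope P"
    and "characteristic_function P lam"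
    and "c \<noteq> 0"
    and "x \<in> P"
  shows "(subtopology (Q_space P lam c) (fibre P lam c x)
            homeomorphic_space top_of_set (sphere (0::real^2) 1)
          \<longleftrightarrow> special_point P lam c x)
       \<and> (\<not> special_point P lam c x \<longrightarrow> (\<exists>q. fibre P lam c x = {q}))"
proof -
  \<comment> \<open>The fibres over a point only depend on \<open>P\<close> being a polytope.\<close>
  have P: "polytope P"
    using assms(1) by (simp add: simple_polytope_def)
  have circles: "top_of_set (sphere (0::complex) 1) homeomorphic_space top_of_set (sphere (0::real^2) 1)"
    by (intro homeomorphic_space_top_of_set homeomorphic_spheres_gen) auto
  show ?thesis
  proof (cases "all_facets_special P lam c x")
    case True
    have "subtopology (Q_space P lam c) (fibre P lam c x)
        homeomorphic_space top_of_set (sphere (0::real^2) 1)"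
      using fibre_homeomorphic_circle[OF P assms(4) True assms(3)] circles
      by (rule homeomorphic_space_trans)
    then show ?thesis
      using True special_point_iff_all_facets_special[OF P assms(4)] by simp
  next
    case False
    then have fibre: "fibre P lam c x = {qmap P lam c (0, x)}"
      by (rule fibre_eq_singleton[OF assms(4)])
    then have "topspace (subtopology (Q_space P lam c) (fibre P lam c x)) = {qmap P lam c (0, x)}"
      by (auto simp: fibre_def)
    then have "\<not> subtopology (Q_space P lam c) (fibre P lam c x)
        homeomorphic_space top_of_set (sphere (0::real^2) 1)"
      by (rule singleton_not_homeomorphic_sphere)
    then show ?thesis
      using False fibre special_point_iff_all_facets_special[OF P assms(4)] by simp
  qed
qed

end
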